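(* For every $n\ge1$, $$\sum_{e\in\mathbf I_n(021)}t^{\mathrm{asc}(e)}=\sum_{k=0}^{\lfloor (n-1)/2\rfloor}\big|\widetilde{\mathbf I}_{n,k}(021)\big|\,t^k(1+t)^{n-1-2k}.$$
   Context: $\mathbf I_n=\{(e_1,\dots,e_n):0\le e_i\le i-1\}$; $\mathbf I_n(021)$ is the set of $e\in\mathbf I_n$ with no $i<j<k$ such that $e_i<e_k<e_j$. $\mathrm{ASC}(e)=\{i\in[n-1]:e_i<e_{i+1}\}$, $\mathrm{asc}(e)=|\mathrm{ASC}(e)|$. An index $i\in[n-2]$ is a double ascent of $e$ if $\{i,i+1\}\subseteq\mathrm{ASC}(e)$. $\widetilde{\mathbf I}_{n,k}(021)=\{e\in\mathbf I_n(021):\mathrm{asc}(e)=k,\ e\text{ has no double ascents, and } e_{n-1}\ge e_n\}$ (for $n=1$ the last condition is vacuous). *)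

theory Defs
  imports Main "HOL-Computational_Algebra.Polynomial"
begin

(* An inversion sequence e = (e_1,...,e_n) is represented as a list of length n,
   with e_i = e ! (i - 1) (1-based entries). *)

definition inv_seqs :: "nat \<Rightarrow> nat list set" where
  "inv_seqs n = {e. length e = n \<and> (\<forall>i\<in>{1..n}. e ! (i - 1) \<le> i - 1)}"

definition avoids021 :: "nat list \<Rightarrow> bool" where
  "avoids021 e = (\<not> (\<exists>i j k. 1 \<le> i \<and> i < j \<and> j < k \<and> k \<le> length e \<and>
      e ! (i - 1) < e ! (k - 1) \<and> e ! (k - 1) < e ! (j - 1)))"

definition I021 :: "nat \<Rightarrow> nat list set" where
  "I021 n = {e \<in> inv_seqs n. avoids021 e}"

definition ASC :: "nat list \<Rightarrow> nat set" where
  "ASC e = {i \<in> {1..length e - 1}. e ! (i - 1) < e ! i}"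

definition asc :: "nat list \<Rightarrow> nat" where
  "asc e = card (ASC e)"

definition no_double_ascent :: "nat list \<Rightarrow> bool" where
  "no_double_ascent e = (\<forall>i\<in>{1..length e - 2}. \<not> ({i, i + 1} \<subseteq> ASC e))"

(* \<tilde>I_{n,k}(021); for n = 1 the condition e_{n-1} \<ge> e_n is vacuous *)
definition I021_tilde :: "nat \<Rightarrow> nat \<Rightarrow> nat list set" where
  "I021_tilde n k = {e \<in> I021 n. asc e = k \<and> no_double_ascent e \<and>
      (n \<ge> 2 \<longrightarrow> e ! (n - 2) \<ge> e ! (n - 1))}"

end

theory Submission
  imports Defs
begin

text \<open>
  A 021-avoiding inversion sequence starts with \<open>0\<close>, and each of its positive entries is at least
  as large as all earlier entries. Either \<open>e\<^sub>2 = 0\<close> and the leading \<open>0\<close> can be removed, or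
  cutting the sequence at the last position \<open>i \<ge> 2\<close> where \<open>e\<^sub>i\<close> takes its largest admissible
  value \<open>i - 1\<close> splits it into two shorter sequences of the same kind (the right one with its
  positive values shifted up), and its ascent word splits as \<open>u @ True # False # w\<close>. Hence the
  ascent polynomials obey a recurrence that depends on the weight \<open>t ^ k\<close> of a word with \<open>k\<close>
  ascents only through its behaviour under prepending a descent, inserting \<open>True # False\<close>, and
  appending a final ascent. The gamma weight \<open>t ^ k * (1 + t) ^ (l - 2 * k)\<close> of words of length
  \<open>l\<close> with isolated ascents not ending in an ascent (and \<open>0\<close> for all other words) leads to a
  recurrence that differs only by a redistribution of terms, so by induction the two generating
  functions agree; grouping the gamma weights by \<open>k\<close> gives the formula.
\<close>

section \<open>Ascent words\<close>

fun ascent_word :: "nat list \<Rightarrow> bool list" where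
  "ascent_word (x # y # r) = (x < y) # ascent_word (y # r)"
| "ascent_word _ = []"

lemma length_ascent_word: "length (ascent_word e) = length e - 1"
  by (induction e rule: ascent_word.induct) auto

lemma nth_ascent_word: "Suc i < length e \<Longrightarrow> ascent_word e ! i = (e ! i < e ! Suc i)"
proof (induction e arbitrary: i rule: ascent_word.induct)
  case (1 x y r) then show ?case by (cases i) auto
qed auto

lemma ascent_word_append:
  "xs \<noteq> [] \<Longrightarrow> ascent_word (xs @ y # ys) = ascent_word xs @ (last xs < y) # ascent_word (y # ys)"
  by (induction xs rule: ascent_word.induct) auto

lemma ascent_word_map:
  assumes "\<And>x y. f x < f y \<longleftrightarrow> x < y"
  shows "ascent_word (map f e) = ascent_word e"
  by (induction e rule: ascent_word.induct) (auto simp: assms)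

lemma ASC_eq_image_Suc: "ASC e = Suc ` {i. i < length (ascent_word e) \<and> ascent_word e ! i}"
proof -
  have "ASC e = Suc ` {i. Suc i < length e \<and> e ! i < e ! Suc i}"
  proof (intro set_eqI iffI)
    fix i assume "i \<in> ASC e"
    then show "i \<in> Suc ` {i. Suc i < length e \<and> e ! i < e ! Suc i}"
      by (auto simp: ASC_def intro!: image_eqI[of _ _ "i - 1"])
  qed (auto simp: ASC_def)
  then show ?thesis by (auto simp: length_ascent_word nth_ascent_word)
qed

lemma asc_eq_count_ascent_word: "asc e = count_list (ascent_word e) True"
  by (simp add: asc_def ASC_eq_image_Suc card_image count_list_eq_length_filter
      length_filter_conv_card)

lemma last_ascent_word:
  assumes "2 \<le> length e"
  shows "last (ascent_word e) \<longleftrightarrow> e ! (length e - 2) < e ! (length e - 1)"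
proof -
  have "last (ascent_word e) = ascent_word e ! (length e - 2)"
    using assms length_ascent_word[of e] by (subst last_conv_nth) (auto simp: numeral_2_eq_2)
  also have "\<dots> \<longleftrightarrow> e ! (length e - 2) < e ! (length e - 1)"
    using assms by (simp add: nth_ascent_word Suc_diff_Suc numeral_2_eq_2)
  finally show ?thesis .
qed

fun no_adjacent_trues :: "bool list \<Rightarrow> bool" where
  "no_adjacent_trues (x # y # r) = (\<not> (x \<and> y) \<and> no_adjacent_trues (y # r))"
| "no_adjacent_trues _ = True"

lemma no_adjacent_trues_append:
  "no_adjacent_trues (xs @ ys) \<longleftrightarrow>
     no_adjacent_trues xs \<and> no_adjacent_trues ys \<and> \<not> (xs \<noteq> [] \<and> ys \<noteq> [] \<and> last xs \<and> hd ys)"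
proof (induction xs rule: no_adjacent_trues.induct)
  case ("2_2" v) then show ?case by (cases ys) auto
qed auto

lemma no_adjacent_trues_iff_nth:
  "no_adjacent_trues w \<longleftrightarrow> (\<forall>i. Suc i < length w \<longrightarrow> \<not> (w ! i \<and> w ! Suc i))"
proof (induction w rule: no_adjacent_trues.induct)
  case (1 x y r)
  have "(\<forall>i. Suc i < length (x # y # r) \<longrightarrow> \<not> ((x # y # r) ! i \<and> (x # y # r) ! Suc i)) \<longleftrightarrow>
      \<not> (x \<and> y) \<and> (\<forall>i. Suc i < length (y # r) \<longrightarrow> \<not> ((y # r) ! i \<and> (y # r) ! Suc i))"
    by (auto simp: All_less_Suc2 simp del: length_Cons)
  then show ?case using "1.IH" by simp
qed auto

lemma no_double_ascent_iff: "no_double_ascent e \<longleftrightarrow> no_adjacent_trues (ascent_word e)"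
proof -
  have "no_double_ascent e \<longleftrightarrow>
      (\<forall>j. Suc j < length (ascent_word e) \<longrightarrow> \<not> {Suc j, Suc (Suc j)} \<subseteq> ASC e)"
  proof (intro iffI allI impI)
    fix j assume "no_double_ascent e" "Suc j < length (ascent_word e)"
    then show "\<not> {Suc j, Suc (Suc j)} \<subseteq> ASC e"
      by (auto simp: no_double_ascent_def length_ascent_word)
  next
    assume H: "\<forall>j. Suc j < length (ascent_word e) \<longrightarrow> \<not> {Suc j, Suc (Suc j)} \<subseteq> ASC e"
    show "no_double_ascent e"
      unfolding no_double_ascent_def
    proof
      fix i assume i: "i \<in> {1..length e - 2}"
      then have "Suc (i - 1) < length (ascent_word e)" "Suc (i - 1) = i"
        by (auto simp: length_ascent_word)
      then show "\<not> {i, i + 1} \<subseteq> ASC e" using H by fastforce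
    qed
  qed
  also have "\<dots> \<longleftrightarrow> no_adjacent_trues (ascent_word e)"
    by (auto simp: no_adjacent_trues_iff_nth ASC_eq_image_Suc)
  finally show ?thesis .
qed

section \<open>Gamma weights\<close>

definition gamma_word :: "bool list \<Rightarrow> bool" where
  "gamma_word w \<longleftrightarrow> no_adjacent_trues w \<and> (w = [] \<or> \<not> last w)"

definition gamma_weight :: "'a::comm_semiring_1 \<Rightarrow> bool list \<Rightarrow> 'a" where
  "gamma_weight x w = (if gamma_word w
     then x ^ count_list w True * (1 + x) ^ (length w - 2 * count_list w True) else 0)"

lemma gamma_word_count_le: "gamma_word w \<Longrightarrow> 2 * count_list w True \<le> length w"
proof (induction w rule: induct_list012)
  case (3 x y r)
  then have "gamma_word (y # r)" by (auto simp: gamma_word_def)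
  moreover have "gamma_word r" if "x" using 3 that by (cases r) (auto simp: gamma_word_def)
  ultimately show ?case using 3 by (cases x) (auto simp: gamma_word_def)
qed (auto simp: gamma_word_def)

lemma gamma_weight_Nil [simp]: "gamma_weight x [] = 1"
  by (simp add: gamma_weight_def gamma_word_def)

lemma gamma_word_False_Cons [simp]: "gamma_word (False # w) = gamma_word w"
  by (cases w) (auto simp: gamma_word_def)

lemma gamma_weight_False_Cons: "gamma_weight x (False # w) = (1 + x) * gamma_weight x w"
proof (cases "gamma_word w")
  case True
  then have "length (False # w) - 2 * count_list w True = Suc (length w - 2 * count_list w True)"
    using gamma_word_count_le by (simp add: Suc_diff_le)
  then show ?thesis using True by (simp add: gamma_weight_def mult_ac)
qed (simp add: gamma_weight_def)

lemma gamma_weight_snoc_True: "gamma_weight x (w @ [True]) = 0"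
  by (simp add: gamma_weight_def gamma_word_def)

lemma gamma_word_peak: "gamma_word (u @ True # False # w) \<longleftrightarrow> gamma_word u \<and> gamma_word w"
  by (cases w) (auto simp: gamma_word_def no_adjacent_trues_append)

lemma gamma_weight_peak:
  "gamma_weight x (u @ True # False # w) = x * gamma_weight x u * gamma_weight x w"
proof (cases "gamma_word u \<and> gamma_word w")
  case True
  define i j where "i = count_list u True" and "j = count_list w True"
  have "length (u @ True # False # w) - 2 * count_list (u @ True # False # w) True
      = (length u - 2 * i) + (length w - 2 * j)"
    using True gamma_word_count_le by (fastforce simp: i_def j_def)
  then show ?thesis
    using True by (simp add: gamma_weight_def gamma_word_peak power_add i_def j_def mult_ac)
next
  case False
  then show ?thesis by (auto simp: gamma_weight_def gamma_word_peak)
qed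

lemma sum_gamma_weight_by_count:
  fixes x :: "'a::comm_semiring_1"
  assumes "finite S" and "\<And>s. s \<in> S \<Longrightarrow> length (w s) = l"
  shows "(\<Sum>s\<in>S. gamma_weight x (w s)) =
    (\<Sum>k = 0..l div 2. of_nat (card {s \<in> S. gamma_word (w s) \<and> count_list (w s) True = k})
       * x ^ k * (1 + x) ^ (l - 2 * k))"
proof -
  let ?G = "{s \<in> S. gamma_word (w s)}"
  have "(\<Sum>s\<in>S. gamma_weight x (w s)) =
      (\<Sum>s\<in>?G. x ^ count_list (w s) True * (1 + x) ^ (l - 2 * count_list (w s) True))"
    using assms by (simp add: gamma_weight_def sum.inter_filter[symmetric])
  also have "\<dots> = (\<Sum>k = 0..l div 2. \<Sum>s\<in>{s \<in> ?G. count_list (w s) True = k}.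
      x ^ count_list (w s) True * (1 + x) ^ (l - 2 * count_list (w s) True))"
    using assms gamma_word_count_le by (intro sum.group[symmetric]) fastforce+
  also have "\<dots> = (\<Sum>k = 0..l div 2.
      of_nat (card {s \<in> S. gamma_word (w s) \<and> count_list (w s) True = k})
       * x ^ k * (1 + x) ^ (l - 2 * k))"
    by (intro sum.cong) (auto simp: conj_assoc mult.assoc)
  finally show ?thesis .
qed

lemma I021_tilde_eq:
  "I021_tilde n k = {e \<in> I021 n. gamma_word (ascent_word e) \<and> count_list (ascent_word e) True = k}"
proof -
  have "(2 \<le> n \<longrightarrow> e ! (n - 2) \<ge> e ! (n - 1)) \<longleftrightarrow> ascent_word e = [] \<or> \<not> last (ascent_word e)"
    if "length e = n" for e
    using that last_ascent_word[of e] length_ascent_word[of e] by (cases "2 \<le> n") auto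
  then show ?thesis
    by (auto simp: I021_tilde_def gamma_word_def asc_eq_count_ascent_word no_double_ascent_iff
        I021_def inv_seqs_def)
qed

section \<open>Tails of 021-avoiding inversion sequences\<close>

definition positives_are_records :: "nat list \<Rightarrow> bool" where
  "positives_are_records e \<longleftrightarrow>
     (\<forall>j k. j < k \<longrightarrow> k < length e \<longrightarrow> 0 < e ! k \<longrightarrow> e ! j \<le> e ! k)"

lemma positives_are_records_Nil [simp]: "positives_are_records []"
  by (simp add: positives_are_records_def)

lemma positives_are_records_Cons:
  "positives_are_records (x # l) \<longleftrightarrow> positives_are_records l \<and> (\<forall>y\<in>set l. 0 < y \<longrightarrow> x \<le> y)"
proof
  assume H: "positives_are_records (x # l)"
  have "positives_are_records l"
    unfolding positives_are_records_def
  proof (intro allI impI)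
    fix j k assume "j < k" "k < length l" "0 < l ! k"
    then show "l ! j \<le> l ! k"
      using H[unfolded positives_are_records_def, rule_format, of "Suc j" "Suc k"] by simp
  qed
  moreover have "x \<le> y" if "y \<in> set l" "0 < y" for y
  proof -
    obtain k where "k < length l" "l ! k = y" using \<open>y \<in> set l\<close> by (auto simp: in_set_conv_nth)
    then show "x \<le> y"
      using H[unfolded positives_are_records_def, rule_format, of 0 "Suc k"] \<open>0 < y\<close> by simp
  qed
  ultimately show "positives_are_records l \<and> (\<forall>y\<in>set l. 0 < y \<longrightarrow> x \<le> y)" by blast
next
  assume "positives_are_records l \<and> (\<forall>y\<in>set l. 0 < y \<longrightarrow> x \<le> y)"
  then show "positives_are_records (x # l)"
    by (fastforce simp: positives_are_records_def nth_Cons less_Suc_eq_0_disj split: nat.split)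
qed

lemma positives_are_records_append:
  "positives_are_records (a @ b) \<longleftrightarrow> positives_are_records a \<and> positives_are_records b \<and>
     (\<forall>x\<in>set a. \<forall>y\<in>set b. 0 < y \<longrightarrow> x \<le> y)"
  by (induction a) (auto simp: positives_are_records_Cons)

lemma positives_are_records_map:
  assumes "positives_are_records e" and "mono f" and "\<And>x. 0 < f x \<Longrightarrow> 0 < x"
  shows "positives_are_records (map f e)"
  using assms by (auto simp: positives_are_records_def mono_def)

lemma avoids021_iff_positives_are_records:
  assumes "e ! 0 = 0"
  shows "avoids021 e \<longleftrightarrow> positives_are_records e"
proof
  assume av: "avoids021 e"
  show "positives_are_records e"
    unfolding positives_are_records_def
  proof (intro allI impI)
    fix j k assume jk: "j < k" "k < length e" "0 < e ! k"
    show "e ! j \<le> e ! k"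
    proof (rule ccontr)
      assume "\<not> e ! j \<le> e ! k"
      then have "0 < j" using assms by (cases j) auto
      then have "1 < Suc j \<and> Suc j < Suc k \<and> Suc k \<le> length e \<and>
          e ! (1 - 1) < e ! (Suc k - 1) \<and> e ! (Suc k - 1) < e ! (Suc j - 1)"
        using jk assms \<open>\<not> e ! j \<le> e ! k\<close> by simp
      then show False using av unfolding avoids021_def by blast
    qed
  qed
next
  assume rec: "positives_are_records e"
  show "avoids021 e"
    unfolding avoids021_def
  proof clarify
    fix i j k assume "1 \<le> i" "i < j" "j < k" "k \<le> length e"
      "e ! (i - 1) < e ! (k - 1)" "e ! (k - 1) < e ! (j - 1)"
    moreover have "e ! (j - 1) \<le> e ! (k - 1)"
      using rec calculation unfolding positives_are_records_def by (simp add: diff_less_mono)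
    ultimately show False by simp
  qed
qed

text \<open>\<open>tail021 0 m\<close> is the set of tails \<open>[e\<^sub>2, \<dots>, e\<^bsub>m+1\<^esub>]\<close> of the 021-avoiding inversion
  sequences of length \<open>m + 1\<close> (\<open>I021_eq_Cons_0\<close>); in \<open>tail021 d m\<close> all positive entries are
  moreover raised by \<open>d\<close>.\<close>

definition tail021 :: "nat \<Rightarrow> nat \<Rightarrow> nat list set" where
  "tail021 d m = {g. length g = m \<and> (\<forall>r<m. g ! r = 0 \<or> d < g ! r \<and> g ! r \<le> d + r + 1) \<and>
     positives_are_records g}"

lemma length_tail021: "g \<in> tail021 d m \<Longrightarrow> length g = m"
  by (simp add: tail021_def)

lemma nth_tail021_le: "g \<in> tail021 d m \<Longrightarrow> r < m \<Longrightarrow> g ! r \<le> d + r + 1"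
  by (auto simp: tail021_def)

lemma tail021_0 [simp]: "tail021 d 0 = {[]}"
  by (auto simp: tail021_def)

lemma set_tail021_0_le: "a \<in> tail021 0 r \<Longrightarrow> x \<in> set a \<Longrightarrow> x \<le> r"
proof -
  assume a: "a \<in> tail021 0 r" and "x \<in> set a"
  then obtain i where "i < r" "a ! i = x" by (auto simp: in_set_conv_nth length_tail021)
  then show "x \<le> r" using nth_tail021_le[OF a \<open>i < r\<close>] by simp
qed

lemma set_tail021_gt: "b \<in> tail021 d m \<Longrightarrow> y \<in> set b \<Longrightarrow> 0 < y \<Longrightarrow> d < y"
proof -
  assume b: "b \<in> tail021 d m" and "y \<in> set b" "0 < y"
  then obtain i where "i < m" "b ! i = y" by (auto simp: in_set_conv_nth length_tail021)
  then show "d < y" using b \<open>0 < y\<close> by (auto simp: tail021_def)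
qed

lemma finite_tail021: "finite (tail021 d m)"
proof (rule finite_subset)
  show "tail021 d m \<subseteq> {g. set g \<subseteq> {0..d + m} \<and> length g = m}"
    using nth_tail021_le by (fastforce simp: in_set_conv_nth length_tail021)
  show "finite {g. set g \<subseteq> {0..d + m} \<and> length g = m}"
    by (rule finite_lists_length_eq) simp
qed

lemma Cons_0_mem_tail021: "t \<in> tail021 0 m \<Longrightarrow> 0 # t \<in> tail021 0 (Suc m)"
  by (auto simp: tail021_def positives_are_records_Cons nth_Cons split: nat.split)

lemma nth_Cons_0_tail021_le: "t \<in> tail021 0 m \<Longrightarrow> i \<le> m \<Longrightarrow> (0 # t) ! i \<le> i"
  using nth_tail021_le[of t 0 m] by (cases i) auto

lemma I021_eq_Cons_0:
  assumes n: "1 \<le> n"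
  shows "I021 n = Cons 0 ` tail021 0 (n - 1)"
proof
  show "I021 n \<subseteq> Cons 0 ` tail021 0 (n - 1)"
  proof
    fix e assume e: "e \<in> I021 n"
    have len: "length e = n" and av: "avoids021 e" and bound: "\<And>i. i < n \<Longrightarrow> e ! i \<le> i"
      using e by (auto simp: I021_def inv_seqs_def dest!: bspec[of _ _ "Suc i" for i])
    obtain t where et: "e = 0 # t" using len n bound[of 0] by (cases e) auto
    have "t \<in> tail021 0 (n - 1)"
      using len bound[of "Suc r" for r] avoids021_iff_positives_are_records[of e] av et
      by (fastforce simp: tail021_def positives_are_records_Cons)
    then show "e \<in> Cons 0 ` tail021 0 (n - 1)" using et by blast
  qed
  show "Cons 0 ` tail021 0 (n - 1) \<subseteq> I021 n"
  proof
    fix e assume "e \<in> Cons 0 ` tail021 0 (n - 1)"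
    then obtain t where t: "t \<in> tail021 0 (n - 1)" and et: "e = 0 # t" by auto
    have "e ! i \<le> i" if "i < n" for i
      using nth_Cons_0_tail021_le[OF t, of i] that et by simp
    moreover have "avoids021 e"
      using t et avoids021_iff_positives_are_records[of e]
      by (simp add: tail021_def positives_are_records_Cons)
    ultimately show "e \<in> I021 n"
      using length_tail021[OF t] n et by (auto simp: I021_def inv_seqs_def)
  qed
qed

definition shift_pos :: "nat \<Rightarrow> nat \<Rightarrow> nat" where
  "shift_pos d x = (if x = 0 then 0 else x + d)"

lemma shift_pos_less_iff: "shift_pos d x < shift_pos d y \<longleftrightarrow> x < y"
  by (auto simp: shift_pos_def)

lemma inj_map_shift_pos: "inj (map (shift_pos d))"
  by (rule inj_mapI) (auto simp: inj_def shift_pos_def split: if_splits)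

lemma image_shift_pos_tail021: "map (shift_pos d) ` tail021 0 m = tail021 d m"
proof
  show "map (shift_pos d) ` tail021 0 m \<subseteq> tail021 d m"
    by (auto simp: tail021_def shift_pos_def mono_def split: if_splits
        intro!: positives_are_records_map)
next
  show "tail021 d m \<subseteq> map (shift_pos d) ` tail021 0 m"
  proof
    fix b assume b: "b \<in> tail021 d m"
    define g where "g = map (\<lambda>x. x - d) b"
    have "map (shift_pos d) g = b"
      using set_tail021_gt[OF b] by (fastforce simp: g_def shift_pos_def intro!: map_idI)
    moreover have "g \<in> tail021 0 m"
      using b by (auto simp: tail021_def g_def mono_def intro!: positives_are_records_map)
    ultimately show "b \<in> map (shift_pos d) ` tail021 0 m" by blast
  qed
qed

lemma sum_tail021_shift:
  "(\<Sum>b\<in>tail021 d m. f b) = (\<Sum>b\<in>tail021 0 m. f (map (shift_pos d) b))"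
proof -
  have "inj_on (map (shift_pos d)) (tail021 0 m)"
    by (rule inj_on_subset[OF inj_map_shift_pos subset_UNIV])
  then have "(\<Sum>b\<in>map (shift_pos d) ` tail021 0 m. f b) = (\<Sum>b\<in>tail021 0 m. f (map (shift_pos d) b))"
    by (rule sum.reindex_cong) auto
  then show ?thesis by (simp only: image_shift_pos_tail021)
qed

section \<open>Cutting at the last maximal entry\<close>

lemma nth_cut:
  assumes a: "a \<in> tail021 0 r" and b: "b \<in> tail021 r k"
  shows "(a @ Suc r # b) ! r = Suc r"
    and "i < length a \<Longrightarrow> (a @ Suc r # b) ! i = a ! i"
    and "r < i \<Longrightarrow> (a @ Suc r # b) ! i = b ! (i - Suc r)"
  using length_tail021[OF a] by (auto simp: nth_append)

lemma cut_mem_tail021: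
  assumes a: "a \<in> tail021 0 r" and b: "b \<in> tail021 r k"
  shows "a @ Suc r # b \<in> tail021 0 (Suc (r + k))"
proof -
  have "positives_are_records (a @ Suc r # b)"
    using a b set_tail021_0_le[OF a] set_tail021_gt[OF b]
    by (fastforce simp: tail021_def positives_are_records_append positives_are_records_Cons)
  moreover have "(a @ Suc r # b) ! i = 0 \<or> 0 < (a @ Suc r # b) ! i \<and> (a @ Suc r # b) ! i \<le> i + 1"
    if i: "i < Suc (r + k)" for i
  proof (cases i r rule: linorder_cases)
    case less then show ?thesis using a nth_cut(2)[OF a b] by (auto simp: tail021_def)
  next
    case equal then show ?thesis using nth_cut(1)[OF a b] by simp
  next
    case greater
    then have "i - Suc r < k" using i by linarith
    then show ?thesis using greater nth_cut(3)[OF a b] nth_tail021_le[OF b, of "i - Suc r"] by auto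
  qed
  ultimately show ?thesis
    using length_tail021[OF a] length_tail021[OF b] by (simp add: tail021_def)
qed

lemma nth_cut_le:
  assumes a: "a \<in> tail021 0 r" and b: "b \<in> tail021 r k" and "r < i" "i \<le> r + k"
  shows "(a @ Suc r # b) ! i \<le> i"
  using nth_tail021_le[OF b, of "i - Suc r"] nth_cut(3)[OF a b] assms(3,4) by simp

lemma tail021_split_at_last_max:
  assumes g: "g \<in> tail021 0 (Suc m)" and r: "r \<le> m" "g ! r = Suc r"
    and last: "\<And>i. r < i \<Longrightarrow> i \<le> m \<Longrightarrow> g ! i \<noteq> Suc i"
  shows "take r g \<in> tail021 0 r" and "drop (Suc r) g \<in> tail021 r (m - r)"
proof -
  have lg: "length g = Suc m" using length_tail021[OF g] .
  have "g = take r g @ Suc r # drop (Suc r) g"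
    using id_take_nth_drop[of r g] lg r by simp
  then have recs: "positives_are_records (take r g)" "positives_are_records (drop (Suc r) g)"
    using g positives_are_records_append[of "take r g" "Suc r # drop (Suc r) g"]
    by (auto simp: tail021_def positives_are_records_Cons)
  then show "take r g \<in> tail021 0 r"
    using g r lg by (auto simp: tail021_def)
  have "g ! (Suc r + j) = 0 \<or> r < g ! (Suc r + j) \<and> g ! (Suc r + j) \<le> r + j + 1"
    if j: "j < m - r" for j
  proof (cases "g ! (Suc r + j) = 0")
    case False
    then have "g ! r \<le> g ! (Suc r + j)"
      using g j lg by (auto simp: tail021_def positives_are_records_def)
    moreover have "g ! (Suc r + j) \<le> Suc r + j + 1"
      using nth_tail021_le[OF g, of "Suc r + j"] j by simp
    moreover have "g ! (Suc r + j) \<noteq> Suc (Suc r + j)"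
      using last[of "Suc r + j"] j by simp
    ultimately show ?thesis using r by auto
  qed simp
  then show "drop (Suc r) g \<in> tail021 r (m - r)"
    using recs lg by (simp add: tail021_def)
qed

lemma tail021_Suc_cases:
  assumes g: "g \<in> tail021 0 (Suc m)"
  obtains (zero) t where "t \<in> tail021 0 m" "g = 0 # t"
  | (cut) r a b where "r \<le> m" "a \<in> tail021 0 r" "b \<in> tail021 r (m - r)" "g = a @ Suc r # b"
proof (cases "\<exists>i\<le>m. g ! i = Suc i")
  case False
  obtain x t where gt: "g = x # t" using length_tail021[OF g] by (cases g) auto
  have "x \<le> 1" using nth_tail021_le[OF g, of 0] gt by simp
  with False have "x = 0" using gt by fastforce
  moreover have "t \<in> tail021 0 m"
  proof -
    have "t ! r = 0 \<or> 0 < t ! r \<and> t ! r \<le> r + 1" if "r < m" for r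
      using g that False gt by (auto simp: tail021_def dest!: spec[of _ "Suc r"])
    then show ?thesis using g gt by (auto simp: tail021_def positives_are_records_Cons)
  qed
  ultimately show thesis using gt zero by blast
next
  case True
  define r where "r = (GREATEST i. i \<le> m \<and> g ! i = Suc i)"
  have r: "r \<le> m" "g ! r = Suc r" and r_last: "\<And>i. r < i \<Longrightarrow> i \<le> m \<Longrightarrow> g ! i \<noteq> Suc i"
    using GreatestI_nat[of "\<lambda>i. i \<le> m \<and> g ! i = Suc i"]
      Greatest_le_nat[of "\<lambda>i. i \<le> m \<and> g ! i = Suc i"] True by (fastforce simp: r_def)+
  have "g = take r g @ Suc r # drop (Suc r) g"
    using id_take_nth_drop[of r g] length_tail021[OF g] r by simp
  then show thesis
    using cut r tail021_split_at_last_max[OF g r r_last] by blast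
qed

definition cuts :: "nat \<Rightarrow> nat \<Rightarrow> nat list set" where
  "cuts r k = (\<lambda>(a, b). a @ Suc r # b) ` (tail021 0 r \<times> tail021 r k)"

lemma tail021_Suc_eq:
  "tail021 0 (Suc m) = Cons 0 ` tail021 0 m \<union> (\<Union>r<Suc m. cuts r (m - r))"
proof
  show "tail021 0 (Suc m) \<subseteq> Cons 0 ` tail021 0 m \<union> (\<Union>r<Suc m. cuts r (m - r))"
  proof
    fix g assume "g \<in> tail021 0 (Suc m)"
    then show "g \<in> Cons 0 ` tail021 0 m \<union> (\<Union>r<Suc m. cuts r (m - r))"
      by (cases rule: tail021_Suc_cases) (force simp: cuts_def less_Suc_eq_le)+
  qed
  have "cuts r (m - r) \<subseteq> tail021 0 (Suc m)" if "r < Suc m" for r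
    using cut_mem_tail021[of _ r _ "m - r"] that by (auto simp: cuts_def)
  then show "Cons 0 ` tail021 0 m \<union> (\<Union>r<Suc m. cuts r (m - r)) \<subseteq> tail021 0 (Suc m)"
    using Cons_0_mem_tail021 by auto
qed

lemma inj_on_cut: "inj_on (\<lambda>(a, b). a @ Suc r # b) (tail021 0 r \<times> tail021 r k)"
proof (rule inj_onI, clarify)
  fix a b a' b' assume "a \<in> tail021 0 r" "a' \<in> tail021 0 r" "a @ Suc r # b = a' @ Suc r # b'"
  then show "a = a' \<and> b = b'" using length_tail021 by (simp add: append_eq_append_conv)
qed

text \<open>The union in \<open>tail021_Suc_eq\<close> is disjoint: \<open>r\<close> is the last position with entry \<open>r + 1\<close>,
  and sequences \<open>0 # t\<close> have no such position.\<close>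

lemma sum_tail021_Suc:
  fixes f :: "nat list \<Rightarrow> 'a::comm_monoid_add"
  shows "(\<Sum>g\<in>tail021 0 (Suc m). f g) = (\<Sum>t\<in>tail021 0 m. f (0 # t)) +
     (\<Sum>r<Suc m. \<Sum>a\<in>tail021 0 r. \<Sum>b\<in>tail021 r (m - r). f (a @ Suc r # b))"
proof -
  have nth_cuts: "g ! r = Suc r" "\<And>i. r < i \<Longrightarrow> i \<le> m \<Longrightarrow> g ! i \<le> i"
    if "g \<in> cuts r (m - r)" "r \<le> m" for g r
    using that nth_cut(1) nth_cut_le[of _ r _ "m - r"] by (auto simp: cuts_def)
  have "Cons 0 ` tail021 0 m \<inter> (\<Union>r<Suc m. cuts r (m - r)) = {}"
    using nth_cuts(1) nth_Cons_0_tail021_le by (fastforce simp: less_Suc_eq_le)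
  moreover have "cuts p (m - p) \<inter> cuts q (m - q) = {}" if "p < q" "q \<le> m" for p q
    using nth_cuts(1)[of _ q] nth_cuts(2)[of _ p q] that by fastforce
  then have "\<forall>p\<in>{..<Suc m}. \<forall>q\<in>{..<Suc m}. p \<noteq> q \<longrightarrow> cuts p (m - p) \<inter> cuts q (m - q) = {}"
    by (metis Int_commute lessThan_iff less_Suc_eq_le nat_neq_iff)
  moreover have "sum f (cuts r k) = (\<Sum>a\<in>tail021 0 r. \<Sum>b\<in>tail021 r k. f (a @ Suc r # b))" for r k
    unfolding cuts_def using inj_on_cut
    by (simp add: sum.reindex sum.cartesian_product case_prod_beta')
  ultimately show ?thesis
    unfolding tail021_Suc_eq[of m]
    by (simp add: sum.union_disjoint sum.UNION_disjoint cuts_def finite_tail021 sum.reindex)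
qed

section \<open>Generating functions of the tails\<close>

definition tail_ascent_word :: "bool \<Rightarrow> nat list \<Rightarrow> bool list" where
  "tail_ascent_word c g = ascent_word (if c then 0 # g else g)"

lemma tail_ascent_word_Nil [simp]: "tail_ascent_word c [] = []"
  by (simp add: tail_ascent_word_def)

lemma tail_ascent_word_Cons_0:
  "tail_ascent_word c (0 # t) =
     (if c then False # tail_ascent_word True t else tail_ascent_word True t)"
  by (cases t) (simp_all add: tail_ascent_word_def)

lemma ascent_word_Suc_Cons_tail021:
  assumes "b \<in> tail021 r k"
  shows "ascent_word (Suc r # b) = (if k = 0 then [] else False # ascent_word b)"
proof (cases b)
  case (Cons y b')
  then show ?thesis using assms nth_tail021_le[OF assms, of 0] length_tail021[OF assms] by auto
qed (use assms length_tail021 in auto)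

lemma tail_ascent_word_cut:
  assumes a: "a \<in> tail021 0 r" and b: "b \<in> tail021 r k"
  shows "tail_ascent_word c (a @ Suc r # b) =
    (if c \<or> 0 < r then tail_ascent_word c a @ [True] else []) @
    (if k = 0 then [] else False # ascent_word b)"
proof -
  have "last (if c then 0 # a else a) < Suc r" if "c \<or> 0 < r"
    using that set_tail021_0_le[OF a, of "last a"] length_tail021[OF a] by auto
  then show ?thesis
    using length_tail021[OF a] ascent_word_Suc_Cons_tail021[OF b]
      ascent_word_append[of "if c then 0 # a else a" "Suc r" b]
    by (auto simp: tail_ascent_word_def)
qed

text \<open>\<open>tail_sum \<phi> True m\<close> sums the weights of the ascent words of all 021-avoiding inversion
  sequences of length \<open>m + 1\<close>. The family with \<open>c = False\<close> is needed because the right part of a cut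
  has no leading \<open>0\<close> in front of it.\<close>

definition tail_sum :: "(bool list \<Rightarrow> 'a::comm_semiring_1) \<Rightarrow> bool \<Rightarrow> nat \<Rightarrow> 'a" where
  "tail_sum \<phi> c m = (\<Sum>g\<in>tail021 0 m. \<phi> (tail_ascent_word c g))"

lemma sum_ascent_word_tail021: "(\<Sum>b\<in>tail021 d k. \<phi> (ascent_word b)) = tail_sum \<phi> False k"
  unfolding tail_sum_def
  by (subst sum_tail021_shift) (simp add: ascent_word_map shift_pos_less_iff tail_ascent_word_def)

lemma tail_sum_0: "\<phi> [] = 1 \<Longrightarrow> tail_sum \<phi> c 0 = 1"
  by (simp add: tail_sum_def)

text \<open>Both \<open>\<lambda>w. x ^ count_list w True\<close> and \<open>gamma_weight x\<close> are word weights; the recurrence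
  \<open>tail_sum_Suc\<close> depends on the weight only through \<open>s\<close>, \<open>x\<close> and \<open>z\<close>.\<close>

locale word_weight =
  fixes \<phi> :: "bool list \<Rightarrow> 'a::comm_semiring_1" and s x z :: 'a
  assumes weight_Nil: "\<phi> [] = 1"
    and weight_False_Cons: "\<phi> (False # w) = s * \<phi> w"
    and weight_peak: "\<phi> (u @ True # False # w) = x * \<phi> u * \<phi> w"
    and weight_snoc_True: "\<phi> (u @ [True]) = z * \<phi> u"
begin

lemma sum_cut:
  "(\<Sum>a\<in>tail021 0 r. \<Sum>b\<in>tail021 r k. \<phi> (tail_ascent_word c (a @ Suc r # b))) =
     (if c \<or> 0 < r then (if k = 0 then z else x * tail_sum \<phi> False k) * tail_sum \<phi> c r
      else if k = 0 then 1 else s * tail_sum \<phi> False k)" (is "_ = ?cut")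
proof -
  have "(\<Sum>b\<in>tail021 r k. \<phi> (tail_ascent_word c (a @ Suc r # b))) =
      (if c \<or> 0 < r then (if k = 0 then z else x * tail_sum \<phi> False k) * \<phi> (tail_ascent_word c a)
       else if k = 0 then 1 else s * tail_sum \<phi> False k)" (is "_ = ?rhs")
    if a: "a \<in> tail021 0 r" for a
  proof -
    have "(\<Sum>b\<in>tail021 r k. \<phi> (tail_ascent_word c (a @ Suc r # b))) =
        (\<Sum>b\<in>tail021 r k. if c \<or> 0 < r
           then (if k = 0 then z else x * \<phi> (ascent_word b)) * \<phi> (tail_ascent_word c a)
           else if k = 0 then 1 else s * \<phi> (ascent_word b))"
      using tail_ascent_word_cut[OF a, of _ k c]
      by (intro sum.cong)
        (simp_all add: weight_Nil weight_False_Cons weight_peak weight_snoc_True mult_ac)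
    also have "\<dots> = ?rhs"
      by (cases "c \<or> 0 < r"; cases "k = 0")
        (simp_all add: sum_ascent_word_tail021 sum_distrib_left[symmetric]
          sum_distrib_right[symmetric])
    finally show ?thesis .
  qed
  then have "(\<Sum>a\<in>tail021 0 r. \<Sum>b\<in>tail021 r k. \<phi> (tail_ascent_word c (a @ Suc r # b))) =
      (\<Sum>a\<in>tail021 0 r. if c \<or> 0 < r
         then (if k = 0 then z else x * tail_sum \<phi> False k) * \<phi> (tail_ascent_word c a)
         else if k = 0 then 1 else s * tail_sum \<phi> False k)"
    by (rule sum.cong[OF refl])
  also have "\<dots> = ?cut"
    by (cases "c \<or> 0 < r") (auto simp: tail_sum_def sum_distrib_left)
  finally show ?thesis .
qed

lemma tail_sum_Suc:
  "tail_sum \<phi> c (Suc m) = (if c then s else 1) * tail_sum \<phi> True m +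
     (\<Sum>r<m. if c \<or> 0 < r then x * tail_sum \<phi> c r * tail_sum \<phi> False (m - r)
              else s * tail_sum \<phi> False m) +
     (if c \<or> 0 < m then z * tail_sum \<phi> c m else 1)"
proof -
  have "(\<Sum>t\<in>tail021 0 m. \<phi> (tail_ascent_word c (0 # t))) = (if c then s else 1) * tail_sum \<phi> True m"
    by (simp add: tail_ascent_word_Cons_0 weight_False_Cons tail_sum_def sum_distrib_left)
  moreover have
    "(\<Sum>r<m. \<Sum>a\<in>tail021 0 r. \<Sum>b\<in>tail021 r (m - r). \<phi> (tail_ascent_word c (a @ Suc r # b))) =
      (\<Sum>r<m. if c \<or> 0 < r then x * tail_sum \<phi> c r * tail_sum \<phi> False (m - r)
              else s * tail_sum \<phi> False m)"
    by (rule sum.cong) (auto simp: sum_cut mult_ac)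
  ultimately show ?thesis
    unfolding tail_sum_def[of \<phi> c "Suc m"] sum_tail021_Suc by (simp add: sum_cut add.assoc)
qed

end

lemma word_weight_ascents: "word_weight (\<lambda>w. x ^ count_list w True) 1 x x"
  by unfold_locales (simp_all add: power_add mult_ac)

lemma word_weight_gamma: "word_weight (gamma_weight x) (1 + x) x 0"
  by unfold_locales (simp_all add: gamma_weight_False_Cons gamma_weight_peak gamma_weight_snoc_True)

theorem tail_sum_ascents_eq_gamma:
  fixes x :: "'a::comm_semiring_1"
  shows "tail_sum (\<lambda>w. x ^ count_list w True) c m = tail_sum (gamma_weight x) c m"
proof (induction m arbitrary: c rule: less_induct)
  case (less m)
  let ?A = "tail_sum (\<lambda>w. x ^ count_list w True)" and ?G = "tail_sum (gamma_weight x)"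
  show ?case
  proof (cases m)
    case 0
    then show ?thesis by (simp add: tail_sum_0)
  next
    case (Suc n)
    have IH: "?G c' r = ?A c' r" "?G c' (n - r) = ?A c' (n - r)" if "r \<le> n" for c' r
      using less Suc that by simp_all
    have G_sum: "(\<Sum>r<n. if c \<or> 0 < r then x * ?G c r * ?G False (n - r) else (1 + x) * ?G False n) =
        (\<Sum>r<n. if c \<or> 0 < r then x * ?A c r * ?A False (n - r) else (1 + x) * ?A False n)"
      by (intro sum.cong) (simp_all add: IH)
    have "?G c (Suc n) = (if c then 1 + x else 1) * ?A True n +
        (\<Sum>r<n. if c \<or> 0 < r then x * ?A c r * ?A False (n - r) else (1 + x) * ?A False n) +
        (if c \<or> 0 < n then 0 else 1)"
      unfolding word_weight.tail_sum_Suc[OF word_weight_gamma] using IH(1) G_sum by simp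
    moreover have "?A c (Suc n) = ?A True n +
        (\<Sum>r<n. if c \<or> 0 < r then x * ?A c r * ?A False (n - r) else ?A False n) +
        (if c \<or> 0 < n then x * ?A c n else 1)"
      unfolding word_weight.tail_sum_Suc[OF word_weight_ascents] by (simp cong: if_cong)
    txt \<open>The surplus \<open>x * ?A False n\<close> of the gamma recurrence's \<open>r = 0\<close> term is the last term
      of the ascent recurrence.\<close>
    moreover have
      "(\<Sum>r<n. if c \<or> 0 < r then x * ?A c r * ?A False (n - r) else (1 + x) * ?A False n) =
        (\<Sum>r<n. if c \<or> 0 < r then x * ?A c r * ?A False (n - r) else ?A False n) +
        (if c \<or> n = 0 then 0 else x * ?A False n)"
      by (cases n)
        (simp_all add: sum.lessThan_Suc_shift del: sum.lessThan_Suc, simp add: algebra_simps)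
    ultimately show ?thesis
      using Suc by (cases c) (simp_all add: algebra_simps)
  qed
qed

lemma sum_I021_eq_tail_sum:
  "1 \<le> n \<Longrightarrow> (\<Sum>e\<in>I021 n. \<phi> (ascent_word e)) = tail_sum \<phi> True (n - 1)"
  by (simp add: I021_eq_Cons_0 tail_sum_def tail_ascent_word_def sum.reindex)

theorem theorem4p6:
  fixes n :: nat
  assumes "n \<ge> 1"
  shows "(\<Sum>e\<in>I021 n. [:0, 1:] ^ asc e) =
    (\<Sum>k = 0..(n - 1) div 2.
       of_nat (card (I021_tilde n k)) * [:0, 1:] ^ k * [:1, 1:] ^ (n - 1 - 2 * k)
       :: int poly)"
proof -
  let ?t = "[:0, 1:] :: int poly"
  have "(\<Sum>e\<in>I021 n. ?t ^ asc e) = tail_sum (\<lambda>w. ?t ^ count_list w True) True (n - 1)"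
    using sum_I021_eq_tail_sum[OF assms] by (simp add: asc_eq_count_ascent_word)
  also have "\<dots> = tail_sum (gamma_weight ?t) True (n - 1)"
    by (rule tail_sum_ascents_eq_gamma)
  also have "\<dots> = (\<Sum>e\<in>I021 n. gamma_weight ?t (ascent_word e))"
    by (rule sum_I021_eq_tail_sum[OF assms, symmetric])
  also have "\<dots> = (\<Sum>k = 0..(n - 1) div 2.
      of_nat (card (I021_tilde n k)) * ?t ^ k * (1 + ?t) ^ (n - 1 - 2 * k))"
    unfolding I021_tilde_eq
  proof (rule sum_gamma_weight_by_count)
    show "finite (I021 n)" by (simp add: I021_eq_Cons_0[OF assms] finite_tail021)
  qed (simp add: length_ascent_word I021_def inv_seqs_def)
  also have "1 + ?t = [:1, 1:]"
    by (simp add: one_pCons)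
  finally show ?thesis .
qed

end
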